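(* In the setting described in the context (with $L=[0,1]$), let $q\in\{1,\dots,n\}$ and assume there exists $A\subseteq\mathcal C$ with $|A|=n-q$ and $\nu_q(A)=0$. Then $$\min_{\mu\ q\text{-minitive capacity}}\ \max_{1\le k\le N}|S_\mu(x^{(k)})-\alpha^{(k)}|=\nabla_q,$$ where the minimum is over all $q$-minitive capacities $\mu:2^{\mathcal C}\to[0,1]$ (and is attained).
   Context: Let $\mathcal C=\{1,\dots,n\}$ and $L=[0,1]$. A capacity is a map $\mu:2^{\mathcal C}\to[0,1]$ with $\mu(\emptyset)=0$, $\mu(\mathcal C)=1$, monotone for inclusion; it is $q$-minitive if for all $X$ with $|X|<n-q$, $\mu(X)=\min_{Y\supsetneq X,\ |Y|\ge n-q}\mu(Y)$. Sugeno integral: $S_\mu(x)=\max_{A\subseteq\mathcal C}\min(\min_{i\in A}x_i,\mu(A))$ with $\min_{i\in\emptyset}x_i=1$. Training data: $N$ pairs $(x^{(k)},\alpha^{(k)})$, $x^{(k)}\in[0,1]^n$, $\alpha^{(k)}\in[0,1]$. For $A\subsetneq\mathcal C$, $\gamma_{k,A}=\max_{i\in\mathcal C\setminus A}x^{(k)}_i$. Write $t^+=\max(t,0)$. For $1\le i\le N$ and $A\subsetneq\mathcal C$ with $|A|\ge n-q$, let $\sigma_\epsilon(\alpha^{(i)},\gamma_{l,A},\alpha^{(l)})=\min\big(\tfrac{(\alpha^{(l)}-\alpha^{(i)})^+}{2},(\alpha^{(l)}-\gamma_{l,A})^+\big)$, $\nabla_{i,A}=\max\big((\gamma_{i,A}-\alpha^{(i)})^+,\max_{1\le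 l\le N}\sigma_\epsilon(\alpha^{(i)},\gamma_{l,A},\alpha^{(l)})\big)$, $\nabla_i=\min_{A\subsetneq\mathcal C,\ |A|\ge n-q}\nabla_{i,A}$, and $\nabla_q=\max_{1\le i\le N}\nabla_i$. For $A\subsetneq\mathcal C$ with $|A|\ge n-q$, $\nu_q(A)=\max_{1\le k\le N}\big(\gamma_{k,A}\,\epsilon\,\max(\alpha^{(k)}-\nabla_q,0)\big)$, where $a\,\epsilon\,b=b$ if $a<b$ and $a\,\epsilon\,b=0$ if $a\ge b$. *)

theory Defs
  imports Complex_Main
begin

text \<open>Criteria set C = {1..n}. Training data: x k i (k-th example, i-th criterion),
  alpha k, for k in {1..N}. All values are reals.\<close>

definition capacity :: "nat \<Rightarrow> (nat set \<Rightarrow> real) \<Rightarrow> bool" where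
  "capacity n \<mu> \<longleftrightarrow> \<mu> {} = 0 \<and> \<mu> {1..n} = 1 \<and>
     (\<forall>A. A \<subseteq> {1..n} \<longrightarrow> 0 \<le> \<mu> A \<and> \<mu> A \<le> 1) \<and>
     (\<forall>A B. A \<subseteq> B \<and> B \<subseteq> {1..n} \<longrightarrow> \<mu> A \<le> \<mu> B)"

definition q_minitive :: "nat \<Rightarrow> nat \<Rightarrow> (nat set \<Rightarrow> real) \<Rightarrow> bool" where
  "q_minitive n q \<mu> \<longleftrightarrow>
     (\<forall>X. X \<subseteq> {1..n} \<and> card X < n - q \<longrightarrow>
        \<mu> X = Min {\<mu> Y | Y. X \<subset> Y \<and> Y \<subseteq> {1..n} \<and> n - q \<le> card Y})"

definition min_on :: "(nat \<Rightarrow> real) \<Rightarrow> nat set \<Rightarrow> real" where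
  "min_on x A = (if A = {} then 1 else Min (x ` A))"

definition sugeno :: "nat \<Rightarrow> (nat set \<Rightarrow> real) \<Rightarrow> (nat \<Rightarrow> real) \<Rightarrow> real" where
  "sugeno n \<mu> x = Max {min (min_on x A) (\<mu> A) | A. A \<subseteq> {1..n}}"

definition pos :: "real \<Rightarrow> real" where
  "pos t = max t 0"

definition gamma :: "nat \<Rightarrow> (nat \<Rightarrow> nat \<Rightarrow> real) \<Rightarrow> nat \<Rightarrow> nat set \<Rightarrow> real" where
  "gamma n x k A = Max (x k ` ({1..n} - A))"

definition sigma_eps :: "real \<Rightarrow> real \<Rightarrow> real \<Rightarrow> real" where
  "sigma_eps ai g al = min (pos (al - ai) / 2) (pos (al - g))"

definition nabla_iA :: "nat \<Rightarrow> nat \<Rightarrow> (nat \<Rightarrow> nat \<Rightarrow> real) \<Rightarrow> (nat \<Rightarrow> real) \<Rightarrow> nat \<Rightarrow> nat set \<Rightarrow> real" where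
  "nabla_iA n N x \<alpha> i A = max (pos (gamma n x i A - \<alpha> i))
      (Max ((\<lambda>l. sigma_eps (\<alpha> i) (gamma n x l A) (\<alpha> l)) ` {1..N}))"

definition nabla_i :: "nat \<Rightarrow> nat \<Rightarrow> nat \<Rightarrow> (nat \<Rightarrow> nat \<Rightarrow> real) \<Rightarrow> (nat \<Rightarrow> real) \<Rightarrow> nat \<Rightarrow> real" where
  "nabla_i n q N x \<alpha> i = Min ((\<lambda>A. nabla_iA n N x \<alpha> i A) `
       {A. A \<subset> {1..n} \<and> n - q \<le> card A})"

definition nabla_q :: "nat \<Rightarrow> nat \<Rightarrow> nat \<Rightarrow> (nat \<Rightarrow> nat \<Rightarrow> real) \<Rightarrow> (nat \<Rightarrow> real) \<Rightarrow> real" where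
  "nabla_q n q N x \<alpha> = Max ((\<lambda>i. nabla_i n q N x \<alpha> i) ` {1..N})"

definition eps_op :: "real \<Rightarrow> real \<Rightarrow> real" where
  "eps_op a b = (if a < b then b else 0)"

definition nu_q :: "nat \<Rightarrow> nat \<Rightarrow> nat \<Rightarrow> (nat \<Rightarrow> nat \<Rightarrow> real) \<Rightarrow> (nat \<Rightarrow> real) \<Rightarrow> nat set \<Rightarrow> real" where
  "nu_q n q N x \<alpha> A = Max ((\<lambda>k. eps_op (gamma n x k A) (max (\<alpha> k - nabla_q n q N x \<alpha>) 0)) ` {1..N})"

definition fit_error :: "nat \<Rightarrow> nat \<Rightarrow> (nat \<Rightarrow> nat \<Rightarrow> real) \<Rightarrow> (nat \<Rightarrow> real) \<Rightarrow> (nat set \<Rightarrow> real) \<Rightarrow> real" where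
  "fit_error n N x \<alpha> \<mu> = Max ((\<lambda>k. \<bar>sugeno n \<mu> (x k) - \<alpha> k\<bar>) ` {1..N})"

end

theory Submission
  imports Defs
begin

(* Lower bound: if a q-minitive capacity \<mu> fits every example within \<epsilon>, then for
   each example i there is a proper set A with |A| \<ge> n - q such that both \<gamma>(i,A) and \<mu>(A)
   are at most S = S\<^sub>\<mu>(x\<^sup>i): take the set of criteria where x\<^sup>i exceeds S and, if it is too
   small, a large superset of the same capacity provided by q-minitivity. Together with
   S\<^sub>\<mu>(x) \<le> max(\<gamma>\<^sub>A(x), \<mu>(A)) this gives \<nabla>(i,A) \<le> \<epsilon>.

   Upper bound: take \<nu>\<^sub>q on the large proper sets, 1 on the whole criteria set, and extend
   q-minitively to the small sets; the null set of the hypothesis makes the result vanish at the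
   empty set. Each example k is then fitted within \<nabla>\<^sub>q: from above through a set realising
   \<nabla>\<^sub>k, from below because \<nu>\<^sub>q \<ge> \<alpha>\<^sub>k - \<nabla>\<^sub>q on every large set avoiding the level set
   {j. x\<^sup>k\<^sub>j \<ge> \<alpha>\<^sub>k - \<nabla>\<^sub>q}. *)

lemma sugeno_eq_Max_image:
  "sugeno n \<mu> x = Max ((\<lambda>A. min (min_on x A) (\<mu> A)) ` Pow {1..n})"
  unfolding sugeno_def by (rule arg_cong[where f = Max]) auto

lemma sugeno_ge:
  assumes "B \<subseteq> {1..n}"
  shows "min (min_on x B) (\<mu> B) \<le> sugeno n \<mu> x"
  unfolding sugeno_eq_Max_image using assms by (intro Max_ge) auto

lemma sugeno_le:
  assumes "\<And>B. B \<subseteq> {1..n} \<Longrightarrow> min (min_on x B) (\<mu> B) \<le> c"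
  shows "sugeno n \<mu> x \<le> c"
  unfolding sugeno_eq_Max_image using assms by (subst Max_le_iff) auto

lemma sugeno_nonneg:
  assumes "\<mu> {} = 0"
  shows "0 \<le> sugeno n \<mu> x"
  using sugeno_ge[of "{}" n x \<mu>] assms by (simp add: min_on_def)

lemma sugeno_ge_level:
  assumes "t \<le> 1" "t \<le> \<mu> {j\<in>{1..n}. t \<le> x j}"
  shows "t \<le> sugeno n \<mu> x"
proof -
  let ?B = "{j\<in>{1..n}. t \<le> x j}"
  have "t \<le> min_on x ?B"
    using assms(1) by (auto simp: min_on_def Min_ge_iff)
  moreover have "min (min_on x ?B) (\<mu> ?B) \<le> sugeno n \<mu> x"
    by (rule sugeno_ge) auto
  ultimately show ?thesis
    using assms(2) by (meson min.boundedI order_trans)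
qed

lemma sugeno_le_max_gamma:
  assumes mono: "\<And>B. B \<subseteq> A \<Longrightarrow> \<mu> B \<le> \<mu> A" and A: "A \<subset> {1..n}"
  shows "sugeno n \<mu> (x k) \<le> max (gamma n x k A) (\<mu> A)"
proof (rule sugeno_le)
  fix B assume B: "B \<subseteq> {1..n}"
  show "min (min_on (x k) B) (\<mu> B) \<le> max (gamma n x k A) (\<mu> A)"
  proof (cases "B \<subseteq> A")
    case True
    then show ?thesis by (intro min.coboundedI2 max.coboundedI2 mono)
  next
    case False
    then obtain j where j: "j \<in> B" "j \<notin> A" by auto
    have "min_on (x k) B \<le> x k j"
      using j B by (auto simp: min_on_def intro!: Min_le finite_subset[OF B])
    also have "\<dots> \<le> gamma n x k A"
      unfolding gamma_def using j B by (intro Max_ge) auto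
    finally show ?thesis by linarith
  qed
qed

lemma capacity_level_set_le_sugeno:
  assumes "capacity n \<mu>"
  shows "\<mu> {j\<in>{1..n}. sugeno n \<mu> x < x j} \<le> sugeno n \<mu> x"
proof -
  let ?S = "sugeno n \<mu> x" and ?B = "{j\<in>{1..n}. sugeno n \<mu> x < x j}"
  show ?thesis
  proof (cases "?B = {}")
    case True
    have "\<mu> {} = 0" using assms by (simp add: capacity_def)
    then show ?thesis using True sugeno_nonneg[of \<mu> n x] by metis
  next
    case False
    then have "?S < min_on x ?B" by (auto simp: min_on_def)
    moreover have "min (min_on x ?B) (\<mu> ?B) \<le> ?S"
      by (rule sugeno_ge) auto
    ultimately show ?thesis by linarith
  qed
qed

lemma gamma_le:
  assumes "A \<subset> {1..n}" "\<And>j. j \<in> {1..n} \<Longrightarrow> j \<notin> A \<Longrightarrow> x k j \<le> c"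
  shows "gamma n x k A \<le> c"
  unfolding gamma_def using assms by (subst Max_le_iff) auto

lemma gamma_less:
  assumes "A \<subset> {1..n}" "\<And>j. j \<in> {1..n} \<Longrightarrow> j \<notin> A \<Longrightarrow> x k j < c"
  shows "gamma n x k A < c"
  unfolding gamma_def using assms by (subst Max_less_iff) auto

lemma gamma_antimono:
  assumes "A \<subseteq> B" "B \<subset> {1..n}"
  shows "gamma n x k B \<le> gamma n x k A"
  using assms unfolding gamma_def by (intro Max_mono) auto

lemma q_minitive_attained:
  assumes "q_minitive n q \<mu>" "X \<subseteq> {1..n}" "card X < n - q"
  obtains Y where "X \<subset> Y" "Y \<subseteq> {1..n}" "n - q \<le> card Y" "\<mu> Y = \<mu> X"
proof -
  let ?S = "{\<mu> Y | Y. X \<subset> Y \<and> Y \<subseteq> {1..n} \<and> n - q \<le> card Y}"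
  have "finite ?S"
    by (rule finite_subset[of _ "\<mu> ` Pow {1..n}"]) auto
  moreover have "X \<noteq> {1..n}"
    using assms(3) by auto
  then have "\<mu> {1..n} \<in> ?S"
    using assms(2) by auto
  ultimately have "Min ?S \<in> ?S"
    by (intro Min_in) auto
  moreover have "\<mu> X = Min ?S"
    using assms unfolding q_minitive_def by blast
  ultimately show ?thesis
    using that by (smt (verit) mem_Collect_eq)
qed

lemma Diff_last_large_proper_subset:
  assumes "1 \<le> q" "q \<le> n"
  shows "{1..n} - {n} \<subset> {1..n}" "n - q \<le> card ({1..n} - {n})"
proof -
  have "n \<in> {1..n}"
    using assms by simp
  then show "{1..n} - {n} \<subset> {1..n}"
    by blast
  from \<open>n \<in> {1..n}\<close> have "card ({1..n} - {n}) = n - 1"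
    by simp
  then show "n - q \<le> card ({1..n} - {n})"
    using assms(1) by linarith
qed

lemma large_set_below_sugeno:
  assumes cap: "capacity n \<mu>" and qm: "q_minitive n q \<mu>"
    and x_le_1: "\<forall>i\<in>{1..n}. x k i \<le> 1" and q: "1 \<le> q" "q \<le> n"
  obtains A where "A \<subset> {1..n}" "n - q \<le> card A"
    "gamma n x k A \<le> sugeno n \<mu> (x k)" "\<mu> A \<le> sugeno n \<mu> (x k)"
proof -
  define S where "S = sugeno n \<mu> (x k)"
  have \<mu>_le_1: "\<mu> A \<le> 1" if "A \<subseteq> {1..n}" for A
    using cap that unfolding capacity_def by blast
  consider "1 \<le> S" | "S < 1" by linarith
  then show ?thesis
  proof cases
    case 1
    let ?A = "{1..n} - {n}"
    note Diff_last_large_proper_subset[OF q]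
    moreover have "gamma n x k ?A \<le> S"
      using 1 x_le_1 \<open>?A \<subset> {1..n}\<close> by (intro gamma_le) auto
    moreover have "\<mu> ?A \<le> S"
      using 1 \<mu>_le_1[of ?A] by auto
    ultimately show ?thesis
      using that unfolding S_def by blast
  next
    case 2
    define A0 where "A0 = {j\<in>{1..n}. S < x k j}"
    have "A0 \<subseteq> {1..n}"
      unfolding A0_def by blast
    have \<mu>A0: "\<mu> A0 \<le> S"
      unfolding A0_def S_def by (rule capacity_level_set_le_sugeno[OF cap])
    have proper: "Y \<subset> {1..n}" if "Y \<subseteq> {1..n}" "\<mu> Y \<le> S" for Y
      using that 2 cap unfolding capacity_def by auto
    have gamma_le_S: "gamma n x k Y \<le> S" if "A0 \<subseteq> Y" "Y \<subset> {1..n}" for Y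
      using that by (intro gamma_le) (auto simp: A0_def)
    show ?thesis
    proof (cases "n - q \<le> card A0")
      case True
      have "A0 \<subset> {1..n}"
        using proper[OF \<open>A0 \<subseteq> {1..n}\<close> \<mu>A0] .
      with True \<mu>A0 gamma_le_S[of A0] show ?thesis
        unfolding S_def by (intro that) auto
    next
      case False
      then have "card A0 < n - q"
        by linarith
      then obtain Y where Y: "A0 \<subset> Y" "Y \<subseteq> {1..n}" "n - q \<le> card Y" "\<mu> Y = \<mu> A0"
        by (rule q_minitive_attained[OF qm \<open>A0 \<subseteq> {1..n}\<close>])
      then have "Y \<subset> {1..n}"
        using proper \<mu>A0 by simp
      then show ?thesis
        using that[OF _ Y(3)] gamma_le_S[of Y] Y(1,4) \<mu>A0 unfolding S_def by auto
    qed
  qed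
qed

lemma finite_large_subsets: "finite {A. A \<subset> {1..n} \<and> n - q \<le> card A}"
  by (rule finite_subset[of _ "Pow {1..n}"]) auto

lemma nabla_i_le:
  assumes "A \<subset> {1..n}" "n - q \<le> card A"
  shows "nabla_i n q N x \<alpha> i \<le> nabla_iA n N x \<alpha> i A"
  unfolding nabla_i_def using assms finite_large_subsets by (intro Min_le) auto

lemma nabla_i_attained:
  assumes "1 \<le> q" "q \<le> n"
  obtains A where "A \<subset> {1..n}" "n - q \<le> card A" "nabla_iA n N x \<alpha> i A = nabla_i n q N x \<alpha> i"
proof -
  let ?L = "{A. A \<subset> {1..n} \<and> n - q \<le> card A}"
  have "{1..n} - {n} \<in> ?L"
    using Diff_last_large_proper_subset[OF assms] by blast
  then have "nabla_i n q N x \<alpha> i \<in> (\<lambda>A. nabla_iA n N x \<alpha> i A) ` ?L"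
    unfolding nabla_i_def using finite_large_subsets by (intro Min_in) auto
  then obtain A where "A \<in> ?L" "nabla_i n q N x \<alpha> i = nabla_iA n N x \<alpha> i A"
    by blast
  then show ?thesis
    using that[of A] by simp
qed

lemma nabla_i_le_nabla_q:
  assumes "i \<in> {1..N}"
  shows "nabla_i n q N x \<alpha> i \<le> nabla_q n q N x \<alpha>"
  unfolding nabla_q_def using assms by (intro Max_ge) auto

lemma nabla_q_nonneg:
  assumes "1 \<le> N" "1 \<le> q" "q \<le> n"
  shows "0 \<le> nabla_q n q N x \<alpha>"
proof -
  obtain A where "nabla_iA n N x \<alpha> 1 A = nabla_i n q N x \<alpha> 1"
    using nabla_i_attained[OF assms(2,3)] by blast
  moreover have "0 \<le> nabla_iA n N x \<alpha> 1 A"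
    unfolding nabla_iA_def pos_def by auto
  ultimately have "0 \<le> nabla_i n q N x \<alpha> 1"
    by simp
  also have "\<dots> \<le> nabla_q n q N x \<alpha>"
    using assms(1) by (intro nabla_i_le_nabla_q) simp
  finally show ?thesis .
qed

lemma sigma_eps_le:
  assumes "0 \<le> e" "b - e \<le> s" "s \<le> max g m" "m \<le> a + e"
  shows "sigma_eps a g b \<le> e"
proof (cases "s \<le> g")
  case True
  then have "pos (b - g) \<le> e"
    using assms unfolding pos_def by auto
  then show ?thesis
    unfolding sigma_eps_def by (simp add: min.coboundedI2)
next
  case False
  then have "pos (b - a) / 2 \<le> e"
    using assms unfolding pos_def by auto
  then show ?thesis
    unfolding sigma_eps_def by (simp add: min.coboundedI1)
qed

lemma nabla_q_le_fit_error:
  assumes N: "1 \<le> N" and x_le_1: "\<forall>k\<in>{1..N}. \<forall>i\<in>{1..n}. x k i \<le> 1"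
    and q: "1 \<le> q" "q \<le> n" and cap: "capacity n \<mu>" and qm: "q_minitive n q \<mu>"
  shows "nabla_q n q N x \<alpha> \<le> fit_error n N x \<alpha> \<mu>"
proof -
  define e where "e = fit_error n N x \<alpha> \<mu>"
  have err: "\<bar>sugeno n \<mu> (x l) - \<alpha> l\<bar> \<le> e" if "l \<in> {1..N}" for l
    unfolding e_def fit_error_def using that by (intro Max_ge) auto
  have "0 \<le> e"
    using err[of 1] N by force
  have "nabla_i n q N x \<alpha> i \<le> e" if i: "i \<in> {1..N}" for i
  proof -
    obtain A where A: "A \<subset> {1..n}" "n - q \<le> card A"
      "gamma n x i A \<le> sugeno n \<mu> (x i)" "\<mu> A \<le> sugeno n \<mu> (x i)"
      using large_set_below_sugeno[OF cap qm _ q, of x i] x_le_1 i by blast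
    have "sigma_eps (\<alpha> i) (gamma n x l A) (\<alpha> l) \<le> e" if l: "l \<in> {1..N}" for l
    proof (rule sigma_eps_le[OF \<open>0 \<le> e\<close>])
      show "\<alpha> l - e \<le> sugeno n \<mu> (x l)"
        using err[OF l] by linarith
      show "sugeno n \<mu> (x l) \<le> max (gamma n x l A) (\<mu> A)"
        using cap A(1) unfolding capacity_def by (intro sugeno_le_max_gamma) auto
      show "\<mu> A \<le> \<alpha> i + e"
        using A(4) err[OF i] by linarith
    qed
    moreover have "pos (gamma n x i A - \<alpha> i) \<le> e"
      using A(3) err[OF i] \<open>0 \<le> e\<close> unfolding pos_def by auto
    ultimately have "nabla_iA n N x \<alpha> i A \<le> e"
      unfolding nabla_iA_def using N by (auto simp: Max_le_iff)
    then show ?thesis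
      by (rule order_trans[OF nabla_i_le[OF A(1,2)]])
  qed
  then show ?thesis
    unfolding e_def nabla_q_def using N by (auto simp: Max_le_iff)
qed

definition minitive_extension :: "nat \<Rightarrow> nat \<Rightarrow> (nat set \<Rightarrow> real) \<Rightarrow> nat set \<Rightarrow> real" where
  "minitive_extension n q f X =
     (if card X < n - q then Min {f Y | Y. X \<subset> Y \<and> Y \<subseteq> {1..n} \<and> n - q \<le> card Y} else f X)"

lemma minitive_extension_large:
  "n - q \<le> card X \<Longrightarrow> minitive_extension n q f X = f X"
  unfolding minitive_extension_def by simp

lemma q_minitive_minitive_extension: "q_minitive n q (minitive_extension n q f)"
  unfolding q_minitive_def
proof (intro allI impI)
  fix X assume X: "X \<subseteq> {1..n} \<and> card X < n - q"
  let ?L = "{Y. X \<subset> Y \<and> Y \<subseteq> {1..n} \<and> n - q \<le> card Y}"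
  have "minitive_extension n q f X = Min (f ` ?L)"
    unfolding minitive_extension_def setcompr_eq_image using X by simp
  also have "f ` ?L = minitive_extension n q f ` ?L"
    by (rule image_cong) (simp_all add: minitive_extension_large)
  finally show "minitive_extension n q f X =
      Min {minitive_extension n q f Y | Y. X \<subset> Y \<and> Y \<subseteq> {1..n} \<and> n - q \<le> card Y}"
    by (simp only: setcompr_eq_image)
qed

lemma minitive_extension_le:
  assumes "card X < n - q" "X \<subset> Y" "Y \<subseteq> {1..n}" "n - q \<le> card Y"
  shows "minitive_extension n q f X \<le> f Y"
proof -
  have "finite {f Y | Y. X \<subset> Y \<and> Y \<subseteq> {1..n} \<and> n - q \<le> card Y}"
    by (rule finite_subset[of _ "f ` Pow {1..n}"]) auto
  then show ?thesis
    unfolding minitive_extension_def using assms by (auto intro: Min_le)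
qed

lemma minitive_extension_attained:
  assumes "X \<subseteq> {1..n}"
  obtains Y where "X \<subseteq> Y" "Y \<subseteq> {1..n}" "n - q \<le> card Y" "minitive_extension n q f X = f Y"
proof (cases "card X < n - q")
  case True
  then obtain Y where "X \<subset> Y" "Y \<subseteq> {1..n}" "n - q \<le> card Y"
      "minitive_extension n q f Y = minitive_extension n q f X"
    by (rule q_minitive_attained[OF q_minitive_minitive_extension assms])
  then show ?thesis
    using that[of Y] by (simp add: minitive_extension_large)
next
  case False
  then show ?thesis
    using that[of X] assms by (simp add: minitive_extension_large)
qed

lemma minitive_extension_le_large_superset:
  assumes mono: "\<And>A B. A \<subseteq> B \<Longrightarrow> B \<subseteq> {1..n} \<Longrightarrow> f A \<le> f B"
    and "A \<subseteq> Y" "Y \<subseteq> {1..n}" "n - q \<le> card Y"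
  shows "minitive_extension n q f A \<le> f Y"
proof (cases "card A < n - q")
  case True
  then have "A \<subset> Y"
    using assms(2,4) by (metis leD psubsetI)
  with True assms(3,4) show ?thesis
    using minitive_extension_le by blast
next
  case False
  then show ?thesis
    using mono[OF assms(2,3)] by (simp add: minitive_extension_large)
qed

lemma capacity_minitive_extension:
  assumes top: "f {1..n} = 1"
    and bounded: "\<And>A. A \<subseteq> {1..n} \<Longrightarrow> 0 \<le> f A \<and> f A \<le> 1"
    and mono: "\<And>A B. A \<subseteq> B \<Longrightarrow> B \<subseteq> {1..n} \<Longrightarrow> f A \<le> f B"
    and null: "A0 \<subseteq> {1..n}" "card A0 = n - q" "f A0 = 0"
  shows "capacity n (minitive_extension n q f)"
proof -
  let ?\<mu> = "minitive_extension n q f"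
  have bounded_ext: "0 \<le> ?\<mu> A \<and> ?\<mu> A \<le> 1" if A: "A \<subseteq> {1..n}" for A
  proof -
    obtain Y where "A \<subseteq> Y" "Y \<subseteq> {1..n}" "n - q \<le> card Y" "?\<mu> A = f Y"
      by (rule minitive_extension_attained[OF A])
    then show ?thesis
      using bounded by simp
  qed
  have mono_ext: "?\<mu> A \<le> ?\<mu> B" if "A \<subseteq> B" "B \<subseteq> {1..n}" for A B
  proof -
    obtain Y where "B \<subseteq> Y" "Y \<subseteq> {1..n}" "n - q \<le> card Y" "?\<mu> B = f Y"
      by (rule minitive_extension_attained[OF \<open>B \<subseteq> {1..n}\<close>])
    with mono \<open>A \<subseteq> B\<close> show ?thesis
      using minitive_extension_le_large_superset[of n f A Y q] by simp
  qed
  have "?\<mu> {} \<le> f A0"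
    using null(1,2) by (intro minitive_extension_le_large_superset mono) simp_all
  then have "?\<mu> {} = 0"
    using null(3) bounded_ext[of "{}"] by simp
  moreover have "?\<mu> {1..n} = 1"
    using top by (simp add: minitive_extension_large)
  ultimately show ?thesis
    unfolding capacity_def using bounded_ext mono_ext by blast
qed

lemma eps_op_nonneg: "0 \<le> b \<Longrightarrow> 0 \<le> eps_op a b"
  unfolding eps_op_def by simp

lemma eps_op_antimono: "a' \<le> a \<Longrightarrow> 0 \<le> b \<Longrightarrow> eps_op a b \<le> eps_op a' b"
  unfolding eps_op_def by simp

lemma eps_op_le_of_sigma_eps_le:
  assumes "sigma_eps a g b \<le> d" "0 \<le> d" "0 \<le> a"
  shows "eps_op g (max (b - d) 0) \<le> a + d"
proof (cases "g < b - d")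
  case True
  then have "pos (b - a) / 2 \<le> d"
    using assms(1,2) unfolding sigma_eps_def pos_def by (auto simp: min_le_iff_disj)
  then show ?thesis
    using assms(2,3) unfolding eps_op_def pos_def by auto
next
  case False
  then show ?thesis
    using assms(2,3) unfolding eps_op_def by auto
qed

lemma nu_q_ge:
  "k \<in> {1..N} \<Longrightarrow> eps_op (gamma n x k A) (max (\<alpha> k - nabla_q n q N x \<alpha>) 0) \<le> nu_q n q N x \<alpha> A"
  unfolding nu_q_def by (intro Max_ge) auto

lemma nu_q_le:
  assumes "1 \<le> N"
    and "\<And>k. k \<in> {1..N} \<Longrightarrow> eps_op (gamma n x k A) (max (\<alpha> k - nabla_q n q N x \<alpha>) 0) \<le> c"
  shows "nu_q n q N x \<alpha> A \<le> c"
  unfolding nu_q_def using assms by (subst Max_le_iff) auto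

lemma nu_q_nonneg:
  assumes "1 \<le> N"
  shows "0 \<le> nu_q n q N x \<alpha> A"
proof -
  have "0 \<le> eps_op (gamma n x 1 A) (max (\<alpha> 1 - nabla_q n q N x \<alpha>) 0)"
    by (rule eps_op_nonneg) simp
  also have "\<dots> \<le> nu_q n q N x \<alpha> A"
    using assms by (intro nu_q_ge) simp
  finally show ?thesis .
qed

lemma nu_q_le_one:
  assumes "1 \<le> N" "\<forall>k\<in>{1..N}. \<alpha> k \<le> 1" "0 \<le> nabla_q n q N x \<alpha>"
  shows "nu_q n q N x \<alpha> A \<le> 1"
proof (rule nu_q_le[OF assms(1)])
  fix k assume "k \<in> {1..N}"
  then have "\<alpha> k \<le> 1"
    using assms(2) by blast
  then have "max (\<alpha> k - nabla_q n q N x \<alpha>) 0 \<le> 1"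
    using assms(3) by simp
  then show "eps_op (gamma n x k A) (max (\<alpha> k - nabla_q n q N x \<alpha>) 0) \<le> 1"
    unfolding eps_op_def by auto
qed

lemma nu_q_mono:
  assumes "1 \<le> N" "A \<subseteq> B" "B \<subset> {1..n}"
  shows "nu_q n q N x \<alpha> A \<le> nu_q n q N x \<alpha> B"
proof (rule nu_q_le[OF assms(1)])
  fix k assume "k \<in> {1..N}"
  have "eps_op (gamma n x k A) (max (\<alpha> k - nabla_q n q N x \<alpha>) 0)
      \<le> eps_op (gamma n x k B) (max (\<alpha> k - nabla_q n q N x \<alpha>) 0)"
    using assms(2,3) by (intro eps_op_antimono gamma_antimono) auto
  also have "\<dots> \<le> nu_q n q N x \<alpha> B"
    using \<open>k \<in> {1..N}\<close> by (rule nu_q_ge)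
  finally show "eps_op (gamma n x k A) (max (\<alpha> k - nabla_q n q N x \<alpha>) 0) \<le> nu_q n q N x \<alpha> B" .
qed

lemma nu_q_le_of_nabla_iA_le:
  assumes "1 \<le> N" "0 \<le> \<alpha> k" "0 \<le> nabla_q n q N x \<alpha>"
    and "nabla_iA n N x \<alpha> k A \<le> nabla_q n q N x \<alpha>"
  shows "nu_q n q N x \<alpha> A \<le> \<alpha> k + nabla_q n q N x \<alpha>"
proof (rule nu_q_le[OF assms(1)])
  fix l assume "l \<in> {1..N}"
  then have "sigma_eps (\<alpha> k) (gamma n x l A) (\<alpha> l) \<le> nabla_iA n N x \<alpha> k A"
    unfolding nabla_iA_def by (intro max.coboundedI2 Max_ge) auto
  with assms(2-4) show "eps_op (gamma n x l A) (max (\<alpha> l - nabla_q n q N x \<alpha>) 0) \<le> \<alpha> k + nabla_q n q N x \<alpha>"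
    by (intro eps_op_le_of_sigma_eps_le) auto
qed

lemma nu_q_ge_of_gamma_less:
  assumes "k \<in> {1..N}" "gamma n x k A < \<alpha> k - nabla_q n q N x \<alpha>" "0 \<le> \<alpha> k - nabla_q n q N x \<alpha>"
  shows "\<alpha> k - nabla_q n q N x \<alpha> \<le> nu_q n q N x \<alpha> A"
  using nu_q_ge[OF assms(1), where n = n and x = x and A = A and q = q and \<alpha> = \<alpha>] assms(2,3)
  unfolding eps_op_def by auto

(* On the whole criteria set, nu_q would involve the junk value Max {} of gamma, so the
   value there is set to 1 by hand. *)

definition fitted_capacity :: "nat \<Rightarrow> nat \<Rightarrow> nat \<Rightarrow> (nat \<Rightarrow> nat \<Rightarrow> real) \<Rightarrow> (nat \<Rightarrow> real) \<Rightarrow> nat set \<Rightarrow> real"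
  where "fitted_capacity n q N x \<alpha> =
    minitive_extension n q (\<lambda>Y. if Y = {1..n} then 1 else nu_q n q N x \<alpha> Y)"

lemma capacity_fitted_capacity:
  assumes N: "1 \<le> N" and \<alpha>_le_1: "\<forall>k\<in>{1..N}. \<alpha> k \<le> 1" and q: "1 \<le> q" "q \<le> n"
    and null: "A0 \<subseteq> {1..n}" "card A0 = n - q" "nu_q n q N x \<alpha> A0 = 0"
  shows "capacity n (fitted_capacity n q N x \<alpha>)"
  unfolding fitted_capacity_def
proof (rule capacity_minitive_extension)
  let ?f = "\<lambda>Y. if Y = {1..n} then 1 else nu_q n q N x \<alpha> Y"
  have "0 \<le> nabla_q n q N x \<alpha>"
    using N q by (rule nabla_q_nonneg)
  then show bounded: "0 \<le> ?f A \<and> ?f A \<le> 1" for A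
    using nu_q_nonneg[OF N] nu_q_le_one[OF N \<alpha>_le_1] by simp
  show "?f A \<le> ?f B" if "A \<subseteq> B" "B \<subseteq> {1..n}" for A B
  proof (cases "B = {1..n}")
    case True
    then show ?thesis
      using bounded[of A] by simp
  next
    case False
    then have "A \<noteq> {1..n}"
      using that by blast
    with False that show ?thesis
      using nu_q_mono[OF N] by simp
  qed
  have "A0 \<noteq> {1..n}"
  proof
    assume "A0 = {1..n}"
    then have "n = n - q"
      using null(2) by simp
    with q show False
      by linarith
  qed
  then show "?f A0 = 0"
    using null(3) by simp
qed (use null in simp_all)

lemma sugeno_fitted_capacity_le:
  assumes N: "1 \<le> N" and k: "k \<in> {1..N}" "0 \<le> \<alpha> k" and q: "1 \<le> q" "q \<le> n"
    and cap: "capacity n (fitted_capacity n q N x \<alpha>)"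
  shows "sugeno n (fitted_capacity n q N x \<alpha>) (x k) \<le> \<alpha> k + nabla_q n q N x \<alpha>"
proof -
  let ?\<mu> = "fitted_capacity n q N x \<alpha>" and ?D = "nabla_q n q N x \<alpha>"
  obtain A where A: "A \<subset> {1..n}" "n - q \<le> card A" "nabla_iA n N x \<alpha> k A = nabla_i n q N x \<alpha> k"
    by (rule nabla_i_attained[OF q])
  have "0 \<le> ?D"
    using N q by (rule nabla_q_nonneg)
  have nabla_kA: "nabla_iA n N x \<alpha> k A \<le> ?D"
    using A(3) nabla_i_le_nabla_q[OF k(1)] by simp
  then have "gamma n x k A \<le> \<alpha> k + ?D"
    unfolding nabla_iA_def pos_def by auto
  moreover have "?\<mu> A = nu_q n q N x \<alpha> A"
    using A(1,2) unfolding fitted_capacity_def by (simp add: minitive_extension_large psubset_eq)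
  then have "?\<mu> A \<le> \<alpha> k + ?D"
    using nu_q_le_of_nabla_iA_le[OF N k(2) \<open>0 \<le> ?D\<close> nabla_kA] by simp
  moreover have "sugeno n ?\<mu> (x k) \<le> max (gamma n x k A) (?\<mu> A)"
    using cap A(1) unfolding capacity_def by (intro sugeno_le_max_gamma) auto
  ultimately show ?thesis
    by linarith
qed

lemma sugeno_fitted_capacity_ge:
  assumes N: "1 \<le> N" and k: "k \<in> {1..N}" "\<alpha> k \<le> 1"
    and q: "1 \<le> q" "q \<le> n" and cap: "capacity n (fitted_capacity n q N x \<alpha>)"
  shows "\<alpha> k - nabla_q n q N x \<alpha> \<le> sugeno n (fitted_capacity n q N x \<alpha>) (x k)"
proof (cases "\<alpha> k - nabla_q n q N x \<alpha> \<le> 0")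
  case True
  then show ?thesis
    using cap sugeno_nonneg[of "fitted_capacity n q N x \<alpha>" n "x k"] unfolding capacity_def by linarith
next
  case False
  define t where "t = \<alpha> k - nabla_q n q N x \<alpha>"
  define B where "B = {j\<in>{1..n}. t \<le> x k j}"
  have "0 < t"
    using False unfolding t_def by simp
  have "t \<le> 1"
    using nabla_q_nonneg[OF N q, of x \<alpha>] k(2) unfolding t_def by linarith
  have "B \<subseteq> {1..n}"
    unfolding B_def by blast
  then obtain Y where Y: "B \<subseteq> Y" "Y \<subseteq> {1..n}" "n - q \<le> card Y"
    "fitted_capacity n q N x \<alpha> B = (if Y = {1..n} then 1 else nu_q n q N x \<alpha> Y)"
    unfolding fitted_capacity_def by (rule minitive_extension_attained)
  have "t \<le> fitted_capacity n q N x \<alpha> B"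
  proof (cases "Y = {1..n}")
    case True
    then show ?thesis
      using Y(4) \<open>t \<le> 1\<close> by simp
  next
    case False
    then have "gamma n x k Y < t"
      using Y(1,2) by (intro gamma_less) (auto simp: B_def)
    then show ?thesis
      using nu_q_ge_of_gamma_less[OF k(1)] \<open>0 < t\<close> Y(4) False unfolding t_def by simp
  qed
  with \<open>t \<le> 1\<close> show ?thesis
    unfolding t_def B_def by (rule sugeno_ge_level)
qed

lemma fit_error_fitted_capacity_le:
  assumes N: "1 \<le> N" and \<alpha>: "\<forall>k\<in>{1..N}. 0 \<le> \<alpha> k \<and> \<alpha> k \<le> 1" and q: "1 \<le> q" "q \<le> n"
    and cap: "capacity n (fitted_capacity n q N x \<alpha>)"
  shows "fit_error n N x \<alpha> (fitted_capacity n q N x \<alpha>) \<le> nabla_q n q N x \<alpha>"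
proof -
  have "\<bar>sugeno n (fitted_capacity n q N x \<alpha>) (x k) - \<alpha> k\<bar> \<le> nabla_q n q N x \<alpha>"
    if k: "k \<in> {1..N}" for k
  proof -
    have "0 \<le> \<alpha> k" "\<alpha> k \<le> 1"
      using \<alpha> k by simp_all
    then show ?thesis
      using sugeno_fitted_capacity_le[OF N k _ q cap] sugeno_fitted_capacity_ge[OF N k _ q cap]
      by (simp add: abs_le_iff)
  qed
  then show ?thesis
    unfolding fit_error_def using N by (subst Max_le_iff) auto
qed

theorem theorem5:
  fixes n N q :: nat and x :: "nat \<Rightarrow> nat \<Rightarrow> real" and \<alpha> :: "nat \<Rightarrow> real"
  assumes "1 \<le> N"
    and "\<forall>k\<in>{1..N}. \<forall>i\<in>{1..n}. 0 \<le> x k i \<and> x k i \<le> 1"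
    and "\<forall>k\<in>{1..N}. 0 \<le> \<alpha> k \<and> \<alpha> k \<le> 1"
    and "1 \<le> q" and "q \<le> n"
    and "\<exists>A. A \<subseteq> {1..n} \<and> card A = n - q \<and> nu_q n q N x \<alpha> A = 0"
  shows "(\<exists>\<mu>. capacity n \<mu> \<and> q_minitive n q \<mu> \<and> fit_error n N x \<alpha> \<mu> = nabla_q n q N x \<alpha>) \<and>
         (\<forall>\<mu>. capacity n \<mu> \<and> q_minitive n q \<mu> \<longrightarrow> nabla_q n q N x \<alpha> \<le> fit_error n N x \<alpha> \<mu>)"
proof -
  note N = assms(1) and q = assms(4,5)
  obtain A0 where null: "A0 \<subseteq> {1..n}" "card A0 = n - q" "nu_q n q N x \<alpha> A0 = 0"
    using assms(6) by blast
  have lower: "nabla_q n q N x \<alpha> \<le> fit_error n N x \<alpha> \<mu>"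
    if "capacity n \<mu>" "q_minitive n q \<mu>" for \<mu>
    using assms(2) by (intro nabla_q_le_fit_error[OF N _ q that]) simp
  let ?\<mu> = "fitted_capacity n q N x \<alpha>"
  have cap: "capacity n ?\<mu>"
    using assms(3) by (intro capacity_fitted_capacity[OF N _ q null]) simp
  have qm: "q_minitive n q ?\<mu>"
    unfolding fitted_capacity_def by (rule q_minitive_minitive_extension)
  have "fit_error n N x \<alpha> ?\<mu> \<le> nabla_q n q N x \<alpha>"
    using N assms(3) q cap by (rule fit_error_fitted_capacity_le)
  with lower[OF cap qm] have "fit_error n N x \<alpha> ?\<mu> = nabla_q n q N x \<alpha>"
    by linarith
  with cap qm lower show ?thesis
    by blast
qed

end
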